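(* Let $K=\mathbb{Z}/3$, let $G$ be a simple graph with edges $e_1,\dots,e_s$ ($s\ge1$), and let $d\ge0$. With $\mathcal{B}_d$ and $\mathcal{J}_d$ as in the context, the map $\mathcal{B}_d\to\mathcal{J}_d$, $t^\gamma\mapsto\{e_i: i\in\operatorname{supp}(\gamma)\}$, is well defined and a bijection. In particular, $$\dim_K C_X(d)=\sum_{i\ge0}|\mathcal{J}_{d-2i}|.$$
   Context: Let $G$ be a simple graph with vertex set $\{1,\dots,n\}$ and a fixed ordering $e_1,\dots,e_s$ of its edges; edge $e_k$ is identified with the variable $t_k$ of $S=K[t_1,\dots,t_s]$, $K$ a finite field. Let $X\subseteq\mathbb{P}^{s-1}$ be the image of the projective torus $\{(x_1:\dots:x_n): x_i\neq0\}\subseteq\mathbb{P}^{n-1}$ under the map whose $k$-th coordinate is $x_ix_j$ when $e_k=\{i,j\}$. Order $X=\{P_1,\dots,P_m\}$. For $d\ge0$, $C_X(d)\subseteq K^m$ is the image of $S_d$ under $f\mapsto \big(f(P_1)/t_1^d(P_1),\dots,f(P_m)/t_1^d(P_m)\big)$. $I(X)$ is the ideal generated by homogeneous polynomials vanishing on $X$. For $\gamma\in\mathbb{N}^s$, $t^\gamma=t_1^{\gamma_1}\cdots t_s^{\gamma_s}$. $\mathcal{B}_d$ is the set of monomials of degree $d$ not divisible by the leading term, in graded reverse lexicographic order with $t_1>\dots>t_s$, of any polynomial in $(I(X),t_s^2)$; $\mathcal{B}_d=\emptyset$ for $d<0$. An Eulerian subgraph of $G$ is a subgraph in which every vertex has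 even degree; its last edge is its edge $e_i$ of largest index $i$. A set $J\subseteq E_G$ is a parity join if $|J\cap E_C|\le |E_C|/2$ for every Eulerian subgraph $C\subseteq G$ with an even number of edges. For $d\ge0$, $\mathcal{J}_d$ is the set of parity joins $J$ with $|J|=d$ such that $J$ contains the last edge of every Eulerian subgraph $C$ (with an even number of edges) for which $|J\cap E_C|=|E_C|/2$; $\mathcal{J}_d=\emptyset$ for $d<0$. *)

theory Defs
  imports "Berlekamp_Zassenhaus.Finite_Field" "HOL-Library.Poly_Mapping" "HOL-Library.Function_Algebras"
begin

datatype three = T0 | T1 | T2

lemma UNIV_three: "(UNIV :: three set) = {T0, T1, T2}"
  using three.exhaust by auto

instance three :: finite
  by standard (simp add: UNIV_three)

lemma card_three: "CARD(three) = 3"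
  by (simp add: UNIV_three)

instance three :: prime_card
  by standard (simp add: card_three)

type_synonym K = "three mod_ring"

type_synonym mon = "nat \<Rightarrow>\<^sub>0 nat"          \<comment> \<open>exponent vector gamma; t^gamma\<close>
type_synonym pol = "mon \<Rightarrow>\<^sub>0 K"

definition mdeg :: "mon \<Rightarrow> nat" where
  "mdeg \<gamma> = (\<Sum>k\<in>Poly_Mapping.keys \<gamma>. Poly_Mapping.lookup \<gamma> k)"

definition tvar :: "nat \<Rightarrow> pol" where
  "tvar k = Poly_Mapping.single (Poly_Mapping.single k 1) 1"

definition inS :: "nat \<Rightarrow> pol \<Rightarrow> bool" where
  "inS s f \<longleftrightarrow> (\<forall>\<gamma>\<in>Poly_Mapping.keys f. Poly_Mapping.keys \<gamma> \<subseteq> {1..s})"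

definition homog :: "nat \<Rightarrow> pol \<Rightarrow> bool" where
  "homog d f \<longleftrightarrow> (\<forall>\<gamma>\<in>Poly_Mapping.keys f. mdeg \<gamma> = d)"

definition peval :: "pol \<Rightarrow> (nat \<Rightarrow> K) \<Rightarrow> K" where
  "peval f v = (\<Sum>\<gamma>\<in>Poly_Mapping.keys f. Poly_Mapping.lookup f \<gamma> * (\<Prod>k\<in>Poly_Mapping.keys \<gamma>. v k ^ Poly_Mapping.lookup \<gamma> k))"

definition ideal_gen :: "nat \<Rightarrow> pol set \<Rightarrow> pol set" where
  "ideal_gen s G = {f. \<exists>F a. finite F \<and> F \<subseteq> G \<and> (\<forall>g\<in>F. inS s (a g)) \<and> f = (\<Sum>g\<in>F. a g * g)}"

text \<open>Graded reverse lexicographic order with t_1 > ... > t_s: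
  grevlex_less b a  means  t^b < t^a.\<close>
definition grevlex_less :: "mon \<Rightarrow> mon \<Rightarrow> bool" where
  "grevlex_less \<beta> \<alpha> \<longleftrightarrow> mdeg \<beta> < mdeg \<alpha> \<or>
     (mdeg \<beta> = mdeg \<alpha> \<and> \<beta> \<noteq> \<alpha> \<and>
       (let k = Max {i. Poly_Mapping.lookup \<alpha> i \<noteq> Poly_Mapping.lookup \<beta> i} in Poly_Mapping.lookup \<alpha> k < Poly_Mapping.lookup \<beta> k))"

definition is_lead_mon :: "pol \<Rightarrow> mon \<Rightarrow> bool" where
  "is_lead_mon f \<mu> \<longleftrightarrow> \<mu> \<in> Poly_Mapping.keys f \<and> (\<forall>\<beta>\<in>Poly_Mapping.keys f. \<beta> \<noteq> \<mu> \<longrightarrow> grevlex_less \<beta> \<mu>)"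

definition mdvd :: "mon \<Rightarrow> mon \<Rightarrow> bool" where
  "mdvd \<mu> \<gamma> \<longleftrightarrow> (\<forall>k. Poly_Mapping.lookup \<mu> k \<le> Poly_Mapping.lookup \<gamma> k)"

text \<open>Graph on vertices {1..n}, edge e_k = E k for k in {1..s}.
  Points of P^{s-1} are represented by vectors v :: nat => K (coordinates 1..s),
  and a projective point is the class of nonzero scalar multiples.\<close>

definition pclass :: "(nat \<Rightarrow> K) \<Rightarrow> (nat \<Rightarrow> K) set" where
  "pclass v = {(\<lambda>k. c * v k) | c. c \<noteq> 0}"

definition torus_image :: "(nat \<Rightarrow> nat set) \<Rightarrow> nat \<Rightarrow> (nat \<Rightarrow> K) \<Rightarrow> (nat \<Rightarrow> K)" where
  "torus_image E s x = (\<lambda>k. if k \<in> {1..s} then (\<Prod>i\<in>E k. x i) else 0)"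

definition Xset :: "(nat \<Rightarrow> nat set) \<Rightarrow> nat \<Rightarrow> nat \<Rightarrow> (nat \<Rightarrow> K) set set" where
  "Xset E n s = {pclass (torus_image E s x) | x. \<forall>i\<in>{1..n}. x i \<noteq> 0}"

definition IX :: "(nat \<Rightarrow> nat set) \<Rightarrow> nat \<Rightarrow> nat \<Rightarrow> pol set" where
  "IX E n s = ideal_gen s {f. inS s f \<and> (\<exists>d. homog d f) \<and>
       (\<forall>P\<in>Xset E n s. \<forall>v\<in>P. peval f v = 0)}"

definition Bset :: "(nat \<Rightarrow> nat set) \<Rightarrow> nat \<Rightarrow> nat \<Rightarrow> nat \<Rightarrow> mon set" where
  "Bset E n s d = {\<gamma>. Poly_Mapping.keys \<gamma> \<subseteq> {1..s} \<and> mdeg \<gamma> = d \<and>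
     \<not> (\<exists>f\<in>ideal_gen s (IX E n s \<union> {tvar s ^ 2}). f \<noteq> 0 \<and>
          (\<exists>\<mu>. is_lead_mon f \<mu> \<and> mdvd \<mu> \<gamma>))}"

text \<open>The code C_X(d), as a subspace of K^X (functions X -> K, zero off X);
  a codeword is P |-> f(P)/t_1^d(P), computed at any representative of P.\<close>
definition codeword :: "(nat \<Rightarrow> nat set) \<Rightarrow> nat \<Rightarrow> nat \<Rightarrow> nat \<Rightarrow> pol \<Rightarrow> (nat \<Rightarrow> K) set \<Rightarrow> K" where
  "codeword E n s d f = (\<lambda>P. if P \<in> Xset E n s
       then peval f (SOME v. v \<in> P) / ((SOME v. v \<in> P) 1) ^ d else 0)"

definition CX :: "(nat \<Rightarrow> nat set) \<Rightarrow> nat \<Rightarrow> nat \<Rightarrow> nat \<Rightarrow> ((nat \<Rightarrow> K) set \<Rightarrow> K) set" where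
  "CX E n s d = codeword E n s d ` {f. inS s f \<and> homog d f}"

definition fscale :: "K \<Rightarrow> ((nat \<Rightarrow> K) set \<Rightarrow> K) \<Rightarrow> ((nat \<Rightarrow> K) set \<Rightarrow> K)" where
  "fscale c w = (\<lambda>P. c * w P)"

definition edges :: "(nat \<Rightarrow> nat set) \<Rightarrow> nat \<Rightarrow> nat set set" where
  "edges E s = E ` {1..s}"

definition eulerian :: "(nat \<Rightarrow> nat set) \<Rightarrow> nat \<Rightarrow> nat set set \<Rightarrow> bool" where
  "eulerian E s C \<longleftrightarrow> C \<subseteq> edges E s \<and> C \<noteq> {} \<and> (\<forall>v. even (card {e\<in>C. v \<in> e}))"

definition last_edge :: "(nat \<Rightarrow> nat set) \<Rightarrow> nat \<Rightarrow> nat set set \<Rightarrow> nat set" where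
  "last_edge E s C = E (Max {k\<in>{1..s}. E k \<in> C})"

definition parity_join :: "(nat \<Rightarrow> nat set) \<Rightarrow> nat \<Rightarrow> nat set set \<Rightarrow> bool" where
  "parity_join E s J \<longleftrightarrow> J \<subseteq> edges E s \<and>
     (\<forall>C. eulerian E s C \<and> even (card C) \<longrightarrow> 2 * card (J \<inter> C) \<le> card C)"

definition Jset :: "(nat \<Rightarrow> nat set) \<Rightarrow> nat \<Rightarrow> nat \<Rightarrow> nat set set set" where
  "Jset E s d = {J. parity_join E s J \<and> card J = d \<and>
     (\<forall>C. eulerian E s C \<and> even (card C) \<and> 2 * card (J \<inter> C) = card C \<longrightarrow> last_edge E s C \<in> J)}"

end

theory Submission
  imports Defs
begin

text \<open>
  Over \<open>K = \<int>/3\<close> every nonzero element squares to \<open>1\<close>, so on \<open>X\<close> a monomial \<open>t^\<gamma>\<close> depends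
  only on its degree and on the parities of its vertex degrees, and binomials \<open>t^\<alpha> - t^\<beta>\<close> with
  the same such data lie in \<open>I(X)\<close>. Edge sets with the same vertex-degree parities and the same
  cardinality parity form a class; every class has exactly one member in some \<open>\<J>\<^sub>k\<close>, namely the
  one of minimal size and, among those, of largest binary value \<open>\<Sum>\<^sub>k\<^sub>\<in>\<^sub>A 2^k\<close>.
  The binomials and \<open>t\<^sub>s\<^sup>2\<close> show that a standard monomial is \<open>t^A\<close> with \<open>A \<in> \<J>\<^sub>d\<close>.
  Conversely, for such \<open>B\<close> the functional summing the coefficients over the class of \<open>t^B\<close>
  vanishes on \<open>(I(X), t\<^sub>s\<^sup>2)\<close>, by orthogonality of the characters of \<open>{\<plusminus>1}\<^sup>n\<close> and \<open>2\<^sup>n \<noteq> 0\<close>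
  in \<open>K\<close>, yet it is nonzero on every polynomial with leading monomial \<open>t^B\<close>. The same
  orthogonality shows that the codewords of \<open>t^A t\<^sub>s^(d - |A|)\<close>, for \<open>A \<in> \<J>\<^sub>d\<^sub>-\<^sub>2\<^sub>i\<close>,
  form a basis of \<open>C\<^sub>X(d)\<close>.
\<close>

lemma card_sym_diff:
  assumes "finite A" "finite B"
  shows "card A + card B = card (sym_diff A B) + 2 * card (A \<inter> B)"
proof -
  have "card (sym_diff A B \<union> A \<inter> B) = card (sym_diff A B) + card (A \<inter> B)"
    using assms by (intro card_Un_disjoint) auto
  moreover have "sym_diff A B \<union> A \<inter> B = A \<union> B" by blast
  ultimately show ?thesis using card_Un_Int[OF assms] by simp
qed

definition binary_value :: "nat set \<Rightarrow> nat" where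
  "binary_value A = (\<Sum>k\<in>A. 2 ^ k)"

lemma binary_value_less:
  assumes fin: "finite A" "finite B" and "A \<noteq> B" and max: "Max (sym_diff A B) \<in> B"
  shows "binary_value A < binary_value B"
proof -
  define m where "m = Max (sym_diff A B)"
  have fin_sd: "finite (sym_diff A B)" using fin by blast
  have "sym_diff A B \<noteq> {}" using \<open>A \<noteq> B\<close> by blast
  then have m: "m \<in> B - A" using Max_in[OF fin_sd] max unfolding m_def by blast
  have below: "A - B \<subseteq> {..<m}"
  proof
    fix k assume k: "k \<in> A - B"
    then have "k \<le> m" unfolding m_def using fin_sd by (intro Max_ge) auto
    moreover have "k \<noteq> m" using k m by blast
    ultimately show "k \<in> {..<m}" by simp
  qed
  have "binary_value A = binary_value (A \<inter> B) + binary_value (A - B)"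
    unfolding binary_value_def using fin(1) by (rule sum.Int_Diff)
  also have "binary_value (A - B) \<le> (\<Sum>k<m. 2 ^ k)"
    unfolding binary_value_def using below by (intro sum_mono2) auto
  also have "(\<Sum>k<m. (2::nat) ^ k) < 2 ^ m"
    by (simp add: lessThan_atLeast0 sum_power2)
  also have "(2::nat) ^ m \<le> binary_value (B - A)"
    unfolding binary_value_def using m fin(2) by (intro member_le_sum) auto
  also have "binary_value (A \<inter> B) + binary_value (B - A) = binary_value B"
    unfolding binary_value_def using sum.Int_Diff[OF fin(2), of "\<lambda>k. (2::nat) ^ k" A] by (simp add: Int_commute)
  finally show ?thesis by simp
qed

section \<open>The field with three elements\<close>

lemma power_eq_power_if_square_eq_one:
  fixes x :: "'a::monoid_mult"
  assumes "x\<^sup>2 = 1" and "even (a + b)"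
  shows "x ^ a = x ^ b"
proof -
  have reduce: "x ^ c = x ^ (c mod 2)" for c
  proof -
    have "x ^ c = x ^ (2 * (c div 2) + c mod 2)" by simp
    also have "\<dots> = (x\<^sup>2) ^ (c div 2) * x ^ (c mod 2)" by (simp only: power_add power_mult)
    finally show ?thesis using assms(1) by simp
  qed
  have "a mod 2 = b mod 2" using assms(2) by presburger
  then show ?thesis using reduce[of a] reduce[of b] by simp
qed

lemma K_three_eq_zero: "(3::K) = 0"
  using of_nat_card_eq_0[where 'a=three] by (simp add: card_three)

lemma K_two_neq_zero: "(2::K) \<noteq> 0"
proof
  assume "(2::K) = 0"
  then have "(3::K) = 1" by (metis add_0 numeral_plus_one semiring_norm(5))
  then show False using K_three_eq_zero by simp
qed

lemma K_minus_one_neq_one: "(-1::K) \<noteq> 1"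
proof
  assume "(-1::K) = 1"
  then have "(2::K) = 0" by (metis add.inverse_inverse diff_minus_eq_add one_add_one right_minus_eq)
  then show False using K_two_neq_zero by simp
qed

lemma K_cases: "(x::K) = 0 \<or> x = 1 \<or> x = -1"
proof -
  obtain i where "i < 3" "x = of_nat i" using surj_of_nat_mod_ring[of x] by (auto simp: card_three)
  then have "i = 0 \<or> i = 1 \<or> i = 2" by auto
  moreover have "(2::K) = -1" using K_three_eq_zero by (simp add: eq_neg_iff_add_eq_0)
  ultimately show ?thesis using \<open>x = of_nat i\<close> by auto
qed

lemma K_square_eq_one: "(x::K) \<noteq> 0 \<Longrightarrow> x\<^sup>2 = 1"
  using K_cases[of x] by auto

lemma sum_plus_minus_one_power: "(\<Sum>y\<in>{1, -1::K}. y ^ m) = (if even m then 2 else 0)"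
proof -
  have "(\<Sum>y\<in>{1, -1::K}. y ^ m) = 1 + (-1) ^ m" using K_minus_one_neq_one by simp
  then show ?thesis by (cases "even m") auto
qed

lemma keys_add_mon: "Poly_Mapping.keys (\<alpha> + \<beta> :: mon) = Poly_Mapping.keys \<alpha> \<union> Poly_Mapping.keys \<beta>"
  by (auto simp: in_keys_iff lookup_add)

lemma mdeg_add: "mdeg (\<alpha> + \<beta>) = mdeg \<alpha> + mdeg \<beta>"
  unfolding mdeg_def by (rule setsum_keys_plus_distrib[where f = "\<lambda>_ x. x"]) auto

lemma mdeg_single: "mdeg (Poly_Mapping.single k m) = m"
  unfolding mdeg_def by auto

definition mon_of_set :: "nat set \<Rightarrow> mon" where
  "mon_of_set A = (\<Sum>k\<in>A. Poly_Mapping.single k 1)"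

lemma lookup_mon_of_set:
  "finite A \<Longrightarrow> Poly_Mapping.lookup (mon_of_set A) k = (if k \<in> A then 1 else 0)"
  unfolding mon_of_set_def lookup_sum lookup_single by (simp add: when_def)

lemma keys_mon_of_set: "finite A \<Longrightarrow> Poly_Mapping.keys (mon_of_set A) = A"
  by (auto simp: in_keys_iff lookup_mon_of_set split: if_splits)

lemma mdeg_mon_of_set: "finite A \<Longrightarrow> mdeg (mon_of_set A) = card A"
  unfolding mdeg_def by (simp add: keys_mon_of_set lookup_mon_of_set)

lemma squarefree_eq_mon_of_set:
  assumes "\<And>k. Poly_Mapping.lookup \<gamma> k \<le> 1"
  shows "\<gamma> = mon_of_set (Poly_Mapping.keys \<gamma>)"
proof (rule poly_mapping_eqI)
  fix k
  have "Poly_Mapping.lookup \<gamma> k = 0 \<or> Poly_Mapping.lookup \<gamma> k = 1" using assms[of k] by auto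
  then show "Poly_Mapping.lookup \<gamma> k = Poly_Mapping.lookup (mon_of_set (Poly_Mapping.keys \<gamma>)) k"
    by (auto simp: lookup_mon_of_set in_keys_iff)
qed

lemma mdvd_mon_of_set:
  assumes fin: "finite A" and dvd: "mdvd \<mu> (mon_of_set A)"
  obtains B where "\<mu> = mon_of_set B" "B \<subseteq> A"
proof
  have le: "Poly_Mapping.lookup \<mu> k \<le> (if k \<in> A then 1 else 0)" for k
    using dvd fin unfolding mdvd_def by (simp add: lookup_mon_of_set)
  have "Poly_Mapping.lookup \<mu> k \<le> 1" for k using le[of k] by (simp split: if_splits)
  then show "\<mu> = mon_of_set (Poly_Mapping.keys \<mu>)" by (rule squarefree_eq_mon_of_set)
  show "Poly_Mapping.keys \<mu> \<subseteq> A"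
  proof
    fix k assume "k \<in> Poly_Mapping.keys \<mu>"
    then show "k \<in> A" using le[of k] by (auto simp: in_keys_iff split: if_splits)
  qed
qed

definition odd_support :: "mon \<Rightarrow> nat set" where
  "odd_support \<gamma> = {k\<in>Poly_Mapping.keys \<gamma>. odd (Poly_Mapping.lookup \<gamma> k)}"

lemma finite_odd_support: "finite (odd_support \<gamma>)"
  unfolding odd_support_def by simp

lemma lookup_mon_of_set_le_one: "finite A \<Longrightarrow> Poly_Mapping.lookup (mon_of_set A) k \<le> 1"
  by (simp add: lookup_mon_of_set)

lemma even_mdeg_iff: "even (mdeg \<gamma>) \<longleftrightarrow> even (card (odd_support \<gamma>))"
  unfolding mdeg_def odd_support_def by (simp add: even_sum_iff)

lemma mdeg_eq_card_odd_support_plus: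
  "mdeg \<gamma> = card (odd_support \<gamma>) +
     (\<Sum>k\<in>Poly_Mapping.keys \<gamma>. Poly_Mapping.lookup \<gamma> k - (if odd (Poly_Mapping.lookup \<gamma> k) then 1 else 0))"
proof -
  let ?l = "Poly_Mapping.lookup \<gamma>" and ?o = "\<lambda>k. if odd (Poly_Mapping.lookup \<gamma> k) then 1 else 0::nat"
  have "mdeg \<gamma> = (\<Sum>k\<in>Poly_Mapping.keys \<gamma>. ?o k + (?l k - ?o k))"
    unfolding mdeg_def by (intro sum.cong) auto
  also have "\<dots> = card (odd_support \<gamma>) + (\<Sum>k\<in>Poly_Mapping.keys \<gamma>. ?l k - ?o k)"
    unfolding sum.distrib odd_support_def by (simp add: sum.If_cases Int_def)
  finally show ?thesis .
qed

lemma card_odd_support_le: "card (odd_support \<gamma>) \<le> mdeg \<gamma>"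
  using mdeg_eq_card_odd_support_plus[of \<gamma>] by linarith

lemma eq_mon_of_odd_support:
  assumes "card (odd_support \<gamma>) = mdeg \<gamma>"
  shows "\<gamma> = mon_of_set (odd_support \<gamma>)"
proof -
  have "Poly_Mapping.lookup \<gamma> k \<le> 1" for k
  proof (cases "k \<in> Poly_Mapping.keys \<gamma>")
    case True
    then have "Poly_Mapping.lookup \<gamma> k - (if odd (Poly_Mapping.lookup \<gamma> k) then 1 else 0) = 0"
      using mdeg_eq_card_odd_support_plus[of \<gamma>] assms by simp
    then show ?thesis by presburger
  qed (simp add: in_keys_iff)
  then have "\<gamma> = mon_of_set (Poly_Mapping.keys \<gamma>)" by (rule squarefree_eq_mon_of_set)
  moreover have "Poly_Mapping.lookup \<gamma> k = 1" if "k \<in> Poly_Mapping.keys \<gamma>" for k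
    using that \<open>\<And>k. Poly_Mapping.lookup \<gamma> k \<le> 1\<close>[of k] by (simp add: in_keys_iff)
  then have "odd_support \<gamma> = Poly_Mapping.keys \<gamma>" unfolding odd_support_def by auto
  ultimately show ?thesis by simp
qed

lemma grevlex_lessI:
  assumes "mdeg \<beta> = mdeg \<alpha>" and "Poly_Mapping.lookup \<alpha> m < Poly_Mapping.lookup \<beta> m"
    and "\<And>i. m < i \<Longrightarrow> Poly_Mapping.lookup \<alpha> i = Poly_Mapping.lookup \<beta> i"
  shows "grevlex_less \<beta> \<alpha>"
proof -
  let ?D = "{i. Poly_Mapping.lookup \<alpha> i \<noteq> Poly_Mapping.lookup \<beta> i}"
  have "?D \<subseteq> Poly_Mapping.keys \<alpha> \<union> Poly_Mapping.keys \<beta>" by (auto simp: in_keys_iff)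
  then have "Max ?D = m"
    using assms(2,3) by (intro Max_eqI) (auto intro: finite_subset simp: not_less[symmetric])
  moreover have "\<beta> \<noteq> \<alpha>" using assms(2) by auto
  ultimately show ?thesis unfolding grevlex_less_def Let_def using assms(1,2) by simp
qed

lemma grevlex_less_mon_of_set:
  assumes fin: "finite A" "finite A'" and card: "card A' = card A"
    and less: "binary_value A < binary_value A'"
  shows "grevlex_less (mon_of_set A') (mon_of_set A)"
proof -
  define m where "m = Max (sym_diff A A')"
  have "sym_diff A A' \<noteq> {}" using less by auto
  then have "m \<in> sym_diff A A'" using fin unfolding m_def by (intro Max_in) auto
  moreover have "m \<notin> A"
  proof
    assume "m \<in> A"
    moreover have "sym_diff A' A = sym_diff A A'" by blast
    ultimately have "binary_value A' < binary_value A"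
      using fin \<open>sym_diff A A' \<noteq> {}\<close> unfolding m_def by (intro binary_value_less) auto
    with less show False by simp
  qed
  moreover have "i \<in> A \<longleftrightarrow> i \<in> A'" if "m < i" for i
  proof (rule ccontr)
    assume "\<not> (i \<in> A \<longleftrightarrow> i \<in> A')"
    then have "i \<le> m" unfolding m_def using fin by (intro Max_ge) auto
    with that show False by simp
  qed
  ultimately show ?thesis
    using fin card by (intro grevlex_lessI[where m = m]) (auto simp: lookup_mon_of_set mdeg_mon_of_set)
qed

definition mon_eval :: "mon \<Rightarrow> (nat \<Rightarrow> 'a::comm_monoid_mult) \<Rightarrow> 'a" where
  "mon_eval \<gamma> v = (\<Prod>k\<in>Poly_Mapping.keys \<gamma>. v k ^ Poly_Mapping.lookup \<gamma> k)"

lemma mon_eval_superset: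
  "finite S \<Longrightarrow> Poly_Mapping.keys \<gamma> \<subseteq> S \<Longrightarrow> mon_eval \<gamma> v = (\<Prod>k\<in>S. v k ^ Poly_Mapping.lookup \<gamma> k)"
  unfolding mon_eval_def by (intro prod.mono_neutral_left) (auto simp: in_keys_iff)

lemma mon_eval_add: "mon_eval (\<alpha> + \<beta>) v = mon_eval \<alpha> v * mon_eval \<beta> v"
proof -
  let ?S = "Poly_Mapping.keys \<alpha> \<union> Poly_Mapping.keys \<beta>"
  have "mon_eval (\<alpha> + \<beta>) v = (\<Prod>k\<in>?S. v k ^ Poly_Mapping.lookup \<alpha> k * v k ^ Poly_Mapping.lookup \<beta> k)"
    by (subst mon_eval_superset[of ?S]) (auto simp: keys_add_mon lookup_add power_add)
  also have "\<dots> = mon_eval \<alpha> v * mon_eval \<beta> v"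
    by (simp add: prod.distrib mon_eval_superset[of ?S])
  finally show ?thesis .
qed

lemma mon_eval_scale: "mon_eval \<gamma> (\<lambda>k. c * v k) = c ^ mdeg \<gamma> * mon_eval \<gamma> v"
  unfolding mon_eval_def mdeg_def by (simp add: power_mult_distrib prod.distrib power_sum)

lemma mon_eval_single: "mon_eval (Poly_Mapping.single k m) v = v k ^ m"
  unfolding mon_eval_def by auto

lemma peval_eq_sum_mon_eval:
  "peval f v = (\<Sum>\<gamma>\<in>Poly_Mapping.keys f. Poly_Mapping.lookup f \<gamma> * mon_eval \<gamma> v)"
  unfolding peval_def mon_eval_def ..

lemma peval_monomial: "peval (Poly_Mapping.single \<gamma> 1) v = mon_eval \<gamma> v"
  by (simp add: peval_eq_sum_mon_eval)

lemma poly_mapping_eq_sum_single: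
  "p = (\<Sum>\<alpha>\<in>Poly_Mapping.keys p. Poly_Mapping.single \<alpha> (Poly_Mapping.lookup p \<alpha>))"
proof (rule poly_mapping_eqI)
  fix k
  show "Poly_Mapping.lookup p k =
      Poly_Mapping.lookup (\<Sum>\<alpha>\<in>Poly_Mapping.keys p. Poly_Mapping.single \<alpha> (Poly_Mapping.lookup p \<alpha>)) k"
    unfolding lookup_sum lookup_single by (simp add: when_def in_keys_iff)
qed

definition lin_ext :: "('m \<Rightarrow> 'a) \<Rightarrow> ('m \<Rightarrow>\<^sub>0 'a::comm_semiring_1) \<Rightarrow> 'a" where
  "lin_ext l g = (\<Sum>\<gamma>\<in>Poly_Mapping.keys g. Poly_Mapping.lookup g \<gamma> * l \<gamma>)"

lemma lin_ext_add: "lin_ext l (f + g) = lin_ext l f + lin_ext l g"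
  unfolding lin_ext_def
  by (rule setsum_keys_plus_distrib[where f = "\<lambda>\<gamma> x. x * l \<gamma>"]) (auto simp: distrib_right)

lemma lin_ext_zero: "lin_ext l 0 = 0"
  unfolding lin_ext_def by simp

lemma lin_ext_sum: "lin_ext l (\<Sum>i\<in>F. h i) = (\<Sum>i\<in>F. lin_ext l (h i))"
  by (induction F rule: infinite_finite_induct) (auto simp: lin_ext_add lin_ext_zero)

lemma lin_ext_single: "lin_ext l (Poly_Mapping.single \<gamma> c) = c * l \<gamma>"
  unfolding lin_ext_def by auto

lemma lin_ext_mult:
  fixes a g :: "('m::comm_monoid_add \<Rightarrow>\<^sub>0 'a::comm_semiring_1)"
  shows "lin_ext l (a * g) = (\<Sum>\<alpha>\<in>Poly_Mapping.keys a. Poly_Mapping.lookup a \<alpha> *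
           (\<Sum>\<beta>\<in>Poly_Mapping.keys g. Poly_Mapping.lookup g \<beta> * l (\<alpha> + \<beta>)))"
proof -
  have "a * g = (\<Sum>\<alpha>\<in>Poly_Mapping.keys a. \<Sum>\<beta>\<in>Poly_Mapping.keys g.
      Poly_Mapping.single (\<alpha> + \<beta>) (Poly_Mapping.lookup a \<alpha> * Poly_Mapping.lookup g \<beta>))"
    by (subst (1 2) poly_mapping_eq_sum_single) (simp add: sum_product mult_single)
  then show ?thesis
    by (simp add: lin_ext_sum lin_ext_single sum_distrib_left mult.assoc)
qed

definition kernel_ideal :: "('m::comm_monoid_add \<Rightarrow> 'a) \<Rightarrow> ('m \<Rightarrow>\<^sub>0 'a::comm_semiring_1) set" where
  "kernel_ideal l = {g. \<forall>a. lin_ext l (a * g) = 0}"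

lemma ideal_gen_subset_kernel_ideal:
  assumes "G \<subseteq> kernel_ideal l"
  shows "ideal_gen s G \<subseteq> kernel_ideal l"
proof
  fix f assume "f \<in> ideal_gen s G"
  then obtain F c where F: "finite F" "F \<subseteq> G" and f: "f = (\<Sum>g\<in>F. c g * g)"
    unfolding ideal_gen_def by blast
  have "lin_ext l (b * f) = 0" for b
  proof -
    have "b * f = (\<Sum>g\<in>F. (b * c g) * g)" unfolding f by (simp add: sum_distrib_left mult.assoc)
    then show ?thesis using F assms unfolding kernel_ideal_def by (simp add: lin_ext_sum subset_eq)
  qed
  then show "f \<in> kernel_ideal l" unfolding kernel_ideal_def by blast
qed

lemma ideal_gen_base: "g \<in> G \<Longrightarrow> g \<in> ideal_gen s G"
  unfolding ideal_gen_def
  by (rule CollectI, rule exI[of _ "{g}"], rule exI[of _ "\<lambda>_. 1"]) (auto simp: inS_def)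

lemma tvar_square: "tvar s ^ 2 = Poly_Mapping.single (Poly_Mapping.single s 2) 1"
proof -
  have "Poly_Mapping.single s 1 + Poly_Mapping.single s (1::nat) = Poly_Mapping.single s 2"
    by (metis one_add_one single_add)
  then show ?thesis unfolding tvar_def power2_eq_square mult_single by simp
qed

section \<open>Parity classes of edge sets\<close>

locale edge_indexed_graph =
  fixes n s :: nat and E :: "nat \<Rightarrow> nat set"
  assumes s_pos: "s \<ge> 1"
    and edges_two: "\<forall>k\<in>{1..s}. E k \<subseteq> {1..n} \<and> card (E k) = 2"
    and inj_E: "inj_on E {1..s}"
begin

lemma finite_edge_indices: "A \<subseteq> {1..s} \<Longrightarrow> finite A"
  using finite_subset by blast

definition vdeg :: "nat set \<Rightarrow> nat \<Rightarrow> nat" where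
  "vdeg A i = card {k\<in>A. i \<in> E k}"

definition even_subgraph :: "nat set \<Rightarrow> bool" where
  "even_subgraph C \<longleftrightarrow> (\<forall>i. even (vdeg C i))"

definition parity_equiv :: "nat set \<Rightarrow> nat set \<Rightarrow> bool" where
  "parity_equiv A B \<longleftrightarrow> (\<forall>i. even (vdeg A i + vdeg B i)) \<and> even (card A + card B)"

text \<open>The edge index sets of the members of \<open>Jset\<close>: the last edge of \<open>E ` C\<close> is \<open>E (Max C)\<close>.\<close>
definition canonical :: "nat set \<Rightarrow> bool" where
  "canonical A \<longleftrightarrow> A \<subseteq> {1..s} \<and>
     (\<forall>C. C \<subseteq> {1..s} \<and> C \<noteq> {} \<and> even_subgraph C \<and> even (card C) \<longrightarrow>
        2 * card (A \<inter> C) \<le> card C \<and> (2 * card (A \<inter> C) = card C \<longrightarrow> Max C \<in> A))"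

lemma vdeg_sym_diff:
  assumes "finite A" "finite B"
  shows "vdeg A i + vdeg B i = vdeg (sym_diff A B) i + 2 * vdeg (A \<inter> B) i"
proof -
  have "sym_diff {k\<in>A. i \<in> E k} {k\<in>B. i \<in> E k} = {k\<in>sym_diff A B. i \<in> E k}"
    and "{k\<in>A. i \<in> E k} \<inter> {k\<in>B. i \<in> E k} = {k\<in>A \<inter> B. i \<in> E k}" by auto
  then show ?thesis
    unfolding vdeg_def using card_sym_diff[of "{k\<in>A. i \<in> E k}" "{k\<in>B. i \<in> E k}"] assms by simp
qed

lemma parity_equiv_iff_sym_diff:
  assumes "finite A" "finite B"
  shows "parity_equiv A B \<longleftrightarrow> even_subgraph (sym_diff A B) \<and> even (card (sym_diff A B))"
  unfolding parity_equiv_def even_subgraph_def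
  using vdeg_sym_diff[OF assms] card_sym_diff[OF assms] by simp

lemma parity_equiv_sym: "parity_equiv A B \<Longrightarrow> parity_equiv B A"
  unfolding parity_equiv_def by (simp add: add.commute)

lemma parity_equiv_trans: "parity_equiv A B \<Longrightarrow> parity_equiv B C \<Longrightarrow> parity_equiv A C"
  unfolding parity_equiv_def by (auto simp: even_add)

lemma canonical_card_le:
  assumes A: "canonical A" and B: "B \<subseteq> {1..s}" and AB: "parity_equiv A B"
  shows "card A \<le> card B"
proof (cases "A = B")
  case False
  define C where "C = sym_diff A B"
  have A_sub: "A \<subseteq> {1..s}" using A unfolding canonical_def by blast
  have fin: "finite A" "finite B" "finite C"
    using A_sub B finite_edge_indices unfolding C_def by auto
  have "C \<subseteq> {1..s}" "C \<noteq> {}" using A_sub B False unfolding C_def by auto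
  moreover have "even_subgraph C" "even (card C)"
    using AB parity_equiv_iff_sym_diff fin unfolding C_def by auto
  ultimately have "2 * card (A \<inter> C) \<le> card C" using A unfolding canonical_def by blast
  moreover have "sym_diff A C = B" unfolding C_def by blast
  ultimately show ?thesis using card_sym_diff[of A C] fin by simp
qed simp

lemma canonical_unique:
  assumes A: "canonical A" and B: "canonical B" and AB: "parity_equiv A B"
  shows "A = B"
proof (rule ccontr)
  assume "A \<noteq> B"
  define C where "C = sym_diff A B"
  have sub: "A \<subseteq> {1..s}" "B \<subseteq> {1..s}" using A B unfolding canonical_def by blast+
  have fin: "finite A" "finite B" using sub finite_edge_indices by auto
  have C: "C \<subseteq> {1..s}" "C \<noteq> {}" using sub \<open>A \<noteq> B\<close> unfolding C_def by auto
  moreover have "even_subgraph C" "even (card C)"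
    using AB parity_equiv_iff_sym_diff fin unfolding C_def by auto
  ultimately have le: "2 * card (A \<inter> C) \<le> card C" "2 * card (B \<inter> C) \<le> card C"
    and tie: "2 * card (A \<inter> C) = card C \<Longrightarrow> Max C \<in> A" "2 * card (B \<inter> C) = card C \<Longrightarrow> Max C \<in> B"
    using A B unfolding canonical_def by blast+
  have "card C = card (A \<inter> C) + card (B \<inter> C)"
    unfolding C_def using fin by (subst card_Un_disjoint[symmetric]) (auto intro: arg_cong[where f = card])
  then have "Max C \<in> A \<inter> B" using le tie by simp
  moreover have "Max C \<in> C" using C finite_edge_indices by (intro Max_in) auto
  ultimately show False unfolding C_def by blast
qed

lemma canonical_subset:
  assumes A: "canonical A" and sub: "A' \<subseteq> A"
  shows "canonical A'"
  unfolding canonical_def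
proof (intro conjI allI impI)
  show "A' \<subseteq> {1..s}" using A sub unfolding canonical_def by auto
  fix C assume C: "C \<subseteq> {1..s} \<and> C \<noteq> {} \<and> even_subgraph C \<and> even (card C)"
  have fin: "finite C" using C finite_edge_indices by blast
  have le: "2 * card (A \<inter> C) \<le> card C" and tie: "2 * card (A \<inter> C) = card C \<longrightarrow> Max C \<in> A"
    using A C unfolding canonical_def by blast+
  have mono: "card (A' \<inter> C) \<le> card (A \<inter> C)" using sub fin by (intro card_mono) auto
  show "2 * card (A' \<inter> C) \<le> card C" using le mono by linarith
  assume eq: "2 * card (A' \<inter> C) = card C"
  then have "A' \<inter> C = A \<inter> C" using le mono sub fin by (intro card_subset_eq) auto
  moreover have "Max C \<in> A \<inter> C" using tie eq le mono C fin by (simp add: Max_in)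
  ultimately show "Max C \<in> A'" by blast
qed

lemma canonical_if_extremal:
  assumes A: "A \<subseteq> {1..s}"
    and min: "\<And>A'. A' \<subseteq> {1..s} \<Longrightarrow> parity_equiv A A' \<Longrightarrow> card A \<le> card A'"
    and max: "\<And>A'. A' \<subseteq> {1..s} \<Longrightarrow> parity_equiv A A' \<Longrightarrow> card A' = card A \<Longrightarrow>
      binary_value A' \<le> binary_value A"
  shows "canonical A"
  unfolding canonical_def
proof (intro conjI allI impI)
  fix C assume C: "C \<subseteq> {1..s} \<and> C \<noteq> {} \<and> even_subgraph C \<and> even (card C)"
  define A' where "A' = sym_diff A C"
  have fin: "finite A" "finite C" "finite A'" using A C finite_edge_indices unfolding A'_def by auto
  have A': "A' \<subseteq> {1..s}" using A C unfolding A'_def by blast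
  have "sym_diff A A' = C" unfolding A'_def by blast
  then have equiv: "parity_equiv A A'" using C parity_equiv_iff_sym_diff fin by auto
  have card_A': "card A + card C = card A' + 2 * card (A \<inter> C)"
    unfolding A'_def using card_sym_diff fin by blast
  then show "2 * card (A \<inter> C) \<le> card C" using min[OF A' equiv] by linarith
  assume tight: "2 * card (A \<inter> C) = card C"
  show "Max C \<in> A"
  proof (rule ccontr)
    assume "Max C \<notin> A"
    then have "binary_value A < binary_value A'"
      using \<open>sym_diff A A' = C\<close> C fin Max_in[of C] by (intro binary_value_less) (auto simp: A'_def)
    moreover have "card A' = card A" using card_A' tight by linarith
    ultimately show False using max[OF A' equiv] by simp
  qed
qed (rule A)

text \<open>A canonical representative: of minimal size in the class, and among those the one
  with the largest binary value.\<close>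
lemma canonical_exists:
  assumes B: "B \<subseteq> {1..s}"
  obtains A where "canonical A" "parity_equiv B A"
proof -
  define S where "S = {A. A \<subseteq> {1..s} \<and> parity_equiv B A}"
  have "finite S" unfolding S_def by simp
  have "B \<in> S" unfolding S_def using B by (simp add: parity_equiv_def)
  define m where "m = Min (card ` S)"
  have m_le: "A \<in> S \<Longrightarrow> m \<le> card A" for A unfolding m_def using \<open>finite S\<close> by auto
  have "m \<in> card ` S" unfolding m_def using \<open>finite S\<close> \<open>B \<in> S\<close> by (intro Min_in) auto
  define S' where "S' = {A\<in>S. card A = m}"
  have "finite S'" "S' \<noteq> {}" using \<open>finite S\<close> \<open>m \<in> card ` S\<close> unfolding S'_def by auto
  then have "Max (binary_value ` S') \<in> binary_value ` S'" by (intro Max_in) auto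
  then obtain A where "A \<in> S'" and A_val: "binary_value A = Max (binary_value ` S')" by auto
  have A_max: "binary_value A' \<le> binary_value A" if "A' \<in> S'" for A'
    unfolding A_val using \<open>finite S'\<close> that by (intro Max_ge) auto
  from \<open>A \<in> S'\<close> have A_sub: "A \<subseteq> {1..s}" and BA: "parity_equiv B A" and card_A: "card A = m"
    unfolding S'_def S_def by auto
  have in_S: "A' \<in> S" if "A' \<subseteq> {1..s}" "parity_equiv A A'" for A'
    using that parity_equiv_trans[OF BA] unfolding S_def by blast
  have "canonical A"
  proof (rule canonical_if_extremal[OF A_sub])
    fix A' assume "A' \<subseteq> {1..s}" "parity_equiv A A'"
    then show "card A \<le> card A'" using in_S m_le card_A by simp
  next
    fix A' assume "A' \<subseteq> {1..s}" "parity_equiv A A'" "card A' = card A"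
    then have "A' \<in> S'" using in_S card_A unfolding S'_def by simp
    then show "binary_value A' \<le> binary_value A" by (rule A_max)
  qed
  with BA show ?thesis using that by blast
qed

definition mon_vdeg :: "mon \<Rightarrow> nat \<Rightarrow> nat" where
  "mon_vdeg \<gamma> i = (\<Sum>k\<in>{k\<in>Poly_Mapping.keys \<gamma>. i \<in> E k}. Poly_Mapping.lookup \<gamma> k)"

lemma mon_vdeg_add: "mon_vdeg (\<alpha> + \<beta>) i = mon_vdeg \<alpha> i + mon_vdeg \<beta> i"
  unfolding mon_vdeg_def sum.inter_filter[OF finite_keys]
  by (rule setsum_keys_plus_distrib[where f = "\<lambda>k x. if i \<in> E k then x else 0"]) auto

lemma mon_vdeg_single: "mon_vdeg (Poly_Mapping.single k m) i = (if i \<in> E k then m else 0)"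
  unfolding mon_vdeg_def sum.inter_filter[OF finite_keys] by simp

lemma mon_vdeg_mon_of_set: "finite A \<Longrightarrow> mon_vdeg (mon_of_set A) i = vdeg A i"
  unfolding mon_vdeg_def vdeg_def by (simp add: keys_mon_of_set lookup_mon_of_set)

lemma even_mon_vdeg_iff: "even (mon_vdeg \<gamma> i) \<longleftrightarrow> even (vdeg (odd_support \<gamma>) i)"
proof -
  have "{k\<in>{k\<in>Poly_Mapping.keys \<gamma>. i \<in> E k}. odd (Poly_Mapping.lookup \<gamma> k)} = {k\<in>odd_support \<gamma>. i \<in> E k}"
    unfolding odd_support_def by auto
  then show ?thesis unfolding mon_vdeg_def vdeg_def by (simp add: even_sum_iff)
qed

lemma mon_vdeg_outside:
  assumes "Poly_Mapping.keys \<gamma> \<subseteq> {1..s}" "i \<notin> {1..n}"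
  shows "mon_vdeg \<gamma> i = 0"
proof -
  have "{k\<in>Poly_Mapping.keys \<gamma>. i \<in> E k} = {}" using assms edges_two by blast
  then show ?thesis unfolding mon_vdeg_def by (metis sum.empty)
qed

text \<open>\<open>t^\<alpha>\<close> and \<open>t^\<beta>\<close> take the same values on \<open>X\<close>, see \<open>mon_eval_eq_on_X\<close>.\<close>
definition mon_equiv :: "mon \<Rightarrow> mon \<Rightarrow> bool" where
  "mon_equiv \<alpha> \<beta> \<longleftrightarrow> Poly_Mapping.keys \<alpha> \<subseteq> {1..s} \<and> Poly_Mapping.keys \<beta> \<subseteq> {1..s} \<and>
     mdeg \<alpha> = mdeg \<beta> \<and> (\<forall>i. even (mon_vdeg \<alpha> i + mon_vdeg \<beta> i))"

lemma mon_equiv_mon_of_set: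
  assumes "A \<subseteq> {1..s}" "A' \<subseteq> {1..s}" "parity_equiv A A'" "card A = card A' + 2 * m"
  shows "mon_equiv (mon_of_set A) (mon_of_set A' + Poly_Mapping.single s (2 * m))"
proof -
  have "finite A" "finite A'" using assms(1,2) finite_edge_indices by auto
  then show ?thesis
    using assms s_pos unfolding mon_equiv_def parity_equiv_def
    by (auto simp: keys_add_mon keys_mon_of_set mdeg_add mdeg_single mdeg_mon_of_set
        mon_vdeg_add mon_vdeg_single mon_vdeg_mon_of_set)
qed

lemma mon_eval_torus_image:
  assumes keys: "Poly_Mapping.keys \<gamma> \<subseteq> {1..s}"
  shows "mon_eval \<gamma> (torus_image E s x) = (\<Prod>i\<in>{1..n}. x i ^ mon_vdeg \<gamma> i)"
proof -
  let ?K = "Poly_Mapping.keys \<gamma>" and ?l = "Poly_Mapping.lookup \<gamma>"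
  have "mon_eval \<gamma> (torus_image E s x) = (\<Prod>k\<in>?K. (\<Prod>i\<in>E k. x i) ^ ?l k)"
    unfolding mon_eval_def torus_image_def using keys by (intro prod.cong) auto
  also have "\<dots> = (\<Prod>k\<in>?K. \<Prod>i\<in>{i\<in>{1..n}. i \<in> E k}. x i ^ ?l k)"
  proof (intro prod.cong refl)
    fix k assume "k \<in> ?K"
    then have "E k \<subseteq> {1..n}" using keys edges_two by blast
    then have "{i\<in>{1..n}. i \<in> E k} = E k" by blast
    then show "(\<Prod>i\<in>E k. x i) ^ ?l k = (\<Prod>i\<in>{i\<in>{1..n}. i \<in> E k}. x i ^ ?l k)"
      by (simp add: prod_power_distrib)
  qed
  also have "\<dots> = (\<Prod>i\<in>{1..n}. \<Prod>k\<in>{k\<in>?K. i \<in> E k}. x i ^ ?l k)"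
    by (rule prod.swap_restrict) auto
  also have "\<dots> = (\<Prod>i\<in>{1..n}. x i ^ mon_vdeg \<gamma> i)"
    unfolding mon_vdeg_def by (simp add: power_sum)
  finally show ?thesis .
qed

text \<open>Every nonzero element of \<open>K\<close> squares to \<open>1\<close>, so only the parities of the vertex degrees matter.\<close>
lemma mon_eval_eq_on_X:
  assumes "mon_equiv \<alpha> \<beta>" and "P \<in> Xset E n s" and "v \<in> P"
  shows "mon_eval \<alpha> v = mon_eval \<beta> v"
proof -
  obtain x c where x: "\<forall>i\<in>{1..n}. x i \<noteq> 0" and v: "v = (\<lambda>k. c * torus_image E s x k)"
    using assms(2,3) unfolding Xset_def pclass_def by auto
  have "x i ^ mon_vdeg \<alpha> i = x i ^ mon_vdeg \<beta> i" if "i \<in> {1..n}" for i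
    using assms(1) x that K_square_eq_one unfolding mon_equiv_def
    by (intro power_eq_power_if_square_eq_one) auto
  then show ?thesis
    using assms(1) unfolding v mon_eval_scale mon_equiv_def by (simp add: mon_eval_torus_image)
qed

definition sign_vectors :: "(nat \<Rightarrow> K) set" where
  "sign_vectors = PiE {1..n} (\<lambda>_. {1, -1})"

lemma sign_vector_nonzero: "x \<in> sign_vectors \<Longrightarrow> i \<in> {1..n} \<Longrightarrow> x i \<noteq> 0"
  unfolding sign_vectors_def by (auto simp: PiE_def Pi_def)

lemma sign_vector_in_X:
  "x \<in> sign_vectors \<Longrightarrow> pclass (torus_image E s x) \<in> Xset E n s"
  unfolding Xset_def using sign_vector_nonzero by blast

lemma torus_image_in_pclass: "torus_image E s x \<in> pclass (torus_image E s x)"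
  unfolding pclass_def by (auto intro!: exI[of _ 1])

text \<open>Orthogonality of the characters of \<open>{\<plusminus>1}\<^sup>n\<close>.\<close>
lemma sum_sign_vectors_mon_eval:
  assumes "Poly_Mapping.keys \<alpha> \<subseteq> {1..s}" "Poly_Mapping.keys \<beta> \<subseteq> {1..s}"
  shows "(\<Sum>x\<in>sign_vectors. mon_eval \<alpha> (torus_image E s x) * mon_eval \<beta> (torus_image E s x)) =
    (if \<forall>i. even (mon_vdeg \<alpha> i + mon_vdeg \<beta> i) then 2 ^ n else 0)"
proof -
  let ?e = "\<lambda>i. mon_vdeg \<alpha> i + mon_vdeg \<beta> i"
  have "(\<Sum>x\<in>sign_vectors. mon_eval \<alpha> (torus_image E s x) * mon_eval \<beta> (torus_image E s x)) =
      (\<Sum>x\<in>sign_vectors. \<Prod>i\<in>{1..n}. x i ^ ?e i)"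
    using assms by (simp add: mon_eval_torus_image power_add prod.distrib)
  also have "\<dots> = (\<Prod>i\<in>{1..n}. \<Sum>y\<in>{1, -1::K}. y ^ ?e i)"
    unfolding sign_vectors_def by (rule prod_sum_PiE[symmetric]) auto
  also have "\<dots> = (\<Prod>i\<in>{1..n}. if even (?e i) then 2 else 0)"
    by (simp add: sum_plus_minus_one_power)
  also have "\<dots> = (if \<forall>i. even (?e i) then 2 ^ n else 0)"
  proof (cases "\<forall>i. even (?e i)")
    case False
    then obtain i where i: "odd (?e i)" by blast
    then have "i \<in> {1..n}" using mon_vdeg_outside assms by fastforce
    then show ?thesis using False i by (intro trans[OF prod_zero]) auto
  qed simp
  finally show ?thesis .
qed

section \<open>Standard monomials\<close>

definition ideal_lead_mon :: "mon \<Rightarrow> bool" where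
  "ideal_lead_mon \<mu> \<longleftrightarrow> (\<exists>f\<in>ideal_gen s (IX E n s \<union> {tvar s ^ 2}). f \<noteq> 0 \<and> is_lead_mon f \<mu>)"

lemma Bset_iff:
  "\<gamma> \<in> Bset E n s d \<longleftrightarrow>
     Poly_Mapping.keys \<gamma> \<subseteq> {1..s} \<and> mdeg \<gamma> = d \<and> \<not> (\<exists>\<mu>. ideal_lead_mon \<mu> \<and> mdvd \<mu> \<gamma>)"
  unfolding Bset_def ideal_lead_mon_def by blast

lemma ideal_lead_mon_binomial:
  assumes equiv: "mon_equiv \<alpha> \<beta>" and less: "grevlex_less \<beta> \<alpha>"
  shows "ideal_lead_mon \<alpha>"
proof -
  have "\<alpha> \<noteq> \<beta>" using less unfolding grevlex_less_def by auto
  define f where "f = Poly_Mapping.single \<alpha> (1::K) - Poly_Mapping.single \<beta> 1"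
  have keys_f: "Poly_Mapping.keys f = {\<alpha>, \<beta>}"
    using \<open>\<alpha> \<noteq> \<beta>\<close> unfolding f_def
    by (auto simp: in_keys_iff lookup_minus lookup_single when_def split: if_splits)
  have "peval f v = mon_eval \<alpha> v - mon_eval \<beta> v" for v
    using \<open>\<alpha> \<noteq> \<beta>\<close> unfolding peval_eq_sum_mon_eval keys_f
    by (simp add: f_def lookup_minus lookup_single)
  then have "\<forall>P\<in>Xset E n s. \<forall>v\<in>P. peval f v = 0"
    using mon_eval_eq_on_X[OF equiv] by simp
  moreover have "inS s f" "homog (mdeg \<alpha>) f"
    using equiv unfolding inS_def homog_def keys_f mon_equiv_def by auto
  ultimately have "f \<in> IX E n s" unfolding IX_def by (intro ideal_gen_base) blast
  then have "f \<in> ideal_gen s (IX E n s \<union> {tvar s ^ 2})" by (intro ideal_gen_base) blast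
  moreover have "f \<noteq> 0" "is_lead_mon f \<alpha>" using keys_f less unfolding is_lead_mon_def by auto
  ultimately show ?thesis unfolding ideal_lead_mon_def by blast
qed

lemma ideal_lead_mon_ts2: "ideal_lead_mon (Poly_Mapping.single s 2)"
proof -
  have "tvar s ^ 2 \<in> ideal_gen s (IX E n s \<union> {tvar s ^ 2})" by (intro ideal_gen_base) blast
  moreover have keys: "Poly_Mapping.keys (tvar s ^ 2) = {Poly_Mapping.single s 2}"
    unfolding tvar_square by simp
  then have "tvar s ^ 2 \<noteq> 0" "is_lead_mon (tvar s ^ 2) (Poly_Mapping.single s 2)"
    unfolding is_lead_mon_def by auto
  ultimately show ?thesis unfolding ideal_lead_mon_def by blast
qed

text \<open>Modulo \<open>I(X)\<close> every \<open>t\<^sub>k\<^sup>2\<close> equals \<open>t\<^sub>s\<^sup>2\<close>, which lies in the ideal.\<close>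
lemma Bset_squarefree:
  assumes \<gamma>: "\<gamma> \<in> Bset E n s d"
  shows "Poly_Mapping.lookup \<gamma> k \<le> 1"
proof (rule ccontr)
  assume "\<not> ?thesis"
  then have two: "2 \<le> Poly_Mapping.lookup \<gamma> k" by simp
  then have "k \<in> Poly_Mapping.keys \<gamma>" by (simp add: in_keys_iff)
  then have k: "k \<in> {1..s}" using \<gamma> unfolding Bset_iff by blast
  have "ideal_lead_mon (Poly_Mapping.single k 2)"
  proof (cases "k = s")
    case False
    show ?thesis
    proof (rule ideal_lead_mon_binomial)
      show "mon_equiv (Poly_Mapping.single k 2) (Poly_Mapping.single s 2)"
        using k s_pos unfolding mon_equiv_def by (simp add: mdeg_single mon_vdeg_single)
      show "grevlex_less (Poly_Mapping.single s 2) (Poly_Mapping.single k 2)"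
        using k False by (intro grevlex_lessI[where m = s]) (auto simp: mdeg_single lookup_single)
    qed
  qed (simp add: ideal_lead_mon_ts2)
  moreover have "mdvd (Poly_Mapping.single k 2) \<gamma>"
    using two unfolding mdvd_def by (simp add: lookup_single when_def)
  ultimately show False using \<gamma> unfolding Bset_iff by blast
qed

text \<open>A smaller member \<open>A'\<close> of the class of \<open>A\<close>, or one of the same size but larger binary value,
  would make \<open>t^A\<close> the leading term of the binomial \<open>t^A - t^A' t\<^sub>s^(|A| - |A'|)\<close> in \<open>I(X)\<close>.\<close>
lemma canonical_if_not_ideal_lead_mon:
  assumes A: "A \<subseteq> {1..s}" and not_lead: "\<not> ideal_lead_mon (mon_of_set A)"
  shows "canonical A"
proof (rule canonical_if_extremal[OF A])
  fix A' assume A': "A' \<subseteq> {1..s}" and equiv: "parity_equiv A A'"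
  have fin: "finite A" "finite A'" using A A' finite_edge_indices by auto
  show "card A \<le> card A'"
  proof (rule ccontr)
    assume "\<not> ?thesis"
    moreover have "even (card A + card A')" using equiv unfolding parity_equiv_def by blast
    ultimately have "card A = card A' + 2 * ((card A - card A') div 2)" "(card A - card A') div 2 \<ge> 1"
      by presburger+
    then obtain m where m: "card A = card A' + 2 * m" "m \<ge> 1" by blast
    have "grevlex_less (mon_of_set A' + Poly_Mapping.single s (2 * m)) (mon_of_set A)"
      using m A A' fin mon_equiv_mon_of_set[OF A A' equiv m(1)] unfolding mon_equiv_def
      by (intro grevlex_lessI[where m = s]) (auto simp: lookup_add lookup_mon_of_set lookup_single)
    then show False
      using ideal_lead_mon_binomial[OF mon_equiv_mon_of_set[OF A A' equiv m(1)]] not_lead by blast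
  qed
  assume card: "card A' = card A"
  show "binary_value A' \<le> binary_value A"
  proof (rule ccontr)
    assume "\<not> ?thesis"
    then have "grevlex_less (mon_of_set A') (mon_of_set A)"
      using fin card by (intro grevlex_less_mon_of_set) auto
    moreover have "mon_equiv (mon_of_set A) (mon_of_set A')"
      using mon_equiv_mon_of_set[OF A A' equiv, of 0] card by simp
    ultimately show False using ideal_lead_mon_binomial not_lead by blast
  qed
qed

lemma Bset_canonical:
  assumes \<gamma>: "\<gamma> \<in> Bset E n s d"
  shows "\<gamma> = mon_of_set (Poly_Mapping.keys \<gamma>) \<and> canonical (Poly_Mapping.keys \<gamma>) \<and>
    card (Poly_Mapping.keys \<gamma>) = d"
proof -
  define A where "A = Poly_Mapping.keys \<gamma>"
  have \<gamma>_A: "\<gamma> = mon_of_set A"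
    unfolding A_def using Bset_squarefree[OF \<gamma>] by (rule squarefree_eq_mon_of_set)
  have A_sub: "A \<subseteq> {1..s}" and fin: "finite A" using \<gamma> by (auto simp: Bset_iff A_def)
  have "canonical A"
    using \<gamma> \<gamma>_A A_sub unfolding Bset_iff mdvd_def by (intro canonical_if_not_ideal_lead_mon) auto
  moreover have "card A = d" using \<gamma> \<gamma>_A mdeg_mon_of_set[OF fin] by (simp add: Bset_iff)
  ultimately show ?thesis using \<gamma>_A unfolding A_def by simp
qed

text \<open>The indicator of the class of \<open>t^B\<close> modulo \<open>I(X)\<close>; its linear extension vanishes on the ideal.\<close>
definition class_functional :: "nat set \<Rightarrow> mon \<Rightarrow> K" where
  "class_functional B \<gamma> = (if mon_equiv \<gamma> (mon_of_set B) then 1 else 0)"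

lemma mon_equiv_canonical:
  assumes B: "canonical B" and equiv: "mon_equiv \<gamma> (mon_of_set B)"
  shows "\<gamma> = mon_of_set (odd_support \<gamma>) \<and> card (odd_support \<gamma>) = card B \<and>
    parity_equiv (odd_support \<gamma>) B"
proof -
  let ?O = "odd_support \<gamma>"
  have fin: "finite B" using B finite_edge_indices unfolding canonical_def by auto
  have O_sub: "?O \<subseteq> {1..s}" using equiv unfolding mon_equiv_def odd_support_def by auto
  have deg: "mdeg \<gamma> = card B" using equiv mdeg_mon_of_set[OF fin] unfolding mon_equiv_def by simp
  have "even (vdeg ?O i + vdeg B i)" for i
    using equiv even_mon_vdeg_iff[of \<gamma> i] unfolding mon_equiv_def
    by (auto simp: even_add mon_vdeg_mon_of_set[OF fin])
  moreover have "even (card ?O + card B)" using even_mdeg_iff[of \<gamma>] deg by (simp add: even_add)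
  ultimately have "parity_equiv ?O B" unfolding parity_equiv_def by blast
  moreover have "card ?O = card B"
    using canonical_card_le[OF B O_sub parity_equiv_sym[OF calculation]] card_odd_support_le[of \<gamma>] deg
    by simp
  ultimately show ?thesis using eq_mon_of_odd_support deg by simp
qed

lemma class_functional_eq_char_sum:
  assumes B: "canonical B" and keys: "Poly_Mapping.keys \<gamma> \<subseteq> {1..s}" and deg: "mdeg \<gamma> = card B"
  shows "class_functional B \<gamma> * 2 ^ n =
    (\<Sum>x\<in>sign_vectors. mon_eval \<gamma> (torus_image E s x) * mon_eval (mon_of_set B) (torus_image E s x))"
proof -
  have "finite B" "Poly_Mapping.keys (mon_of_set B) \<subseteq> {1..s}"
    using B finite_edge_indices keys_mon_of_set unfolding canonical_def by auto
  then show ?thesis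
    using sum_sign_vectors_mon_eval[OF keys] keys deg
    unfolding class_functional_def mon_equiv_def by (simp add: mdeg_mon_of_set)
qed

lemma ts2_in_kernel_ideal:
  assumes B: "canonical B"
  shows "tvar s ^ 2 \<in> kernel_ideal (class_functional B)"
proof -
  have "class_functional B (\<alpha> + Poly_Mapping.single s 2) = 0" for \<alpha>
  proof (rule ccontr)
    let ?\<gamma> = "\<alpha> + Poly_Mapping.single s 2"
    assume "class_functional B ?\<gamma> \<noteq> 0"
    then have "?\<gamma> = mon_of_set (odd_support ?\<gamma>)"
      using mon_equiv_canonical[OF B] unfolding class_functional_def by (auto split: if_splits)
    then have "Poly_Mapping.lookup ?\<gamma> s \<le> 1"
      using lookup_mon_of_set_le_one[OF finite_odd_support] by metis
    then show False by (simp add: lookup_add)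
  qed
  then show ?thesis unfolding kernel_ideal_def tvar_square lin_ext_mult by simp
qed

lemma vanishing_in_kernel_ideal:
  assumes B: "canonical B"
    and g: "inS s g" "homog e g" "\<forall>P\<in>Xset E n s. \<forall>v\<in>P. peval g v = 0"
  shows "g \<in> kernel_ideal (class_functional B)"
proof -
  have fin: "finite B" using B finite_edge_indices unfolding canonical_def by auto
  have deg_g: "\<beta> \<in> Poly_Mapping.keys g \<Longrightarrow> mdeg \<beta> = e" for \<beta> using g(2) unfolding homog_def by blast
  have "(\<Sum>\<beta>\<in>Poly_Mapping.keys g. Poly_Mapping.lookup g \<beta> * class_functional B (\<alpha> + \<beta>)) = 0" for \<alpha>
  proof (cases "Poly_Mapping.keys \<alpha> \<subseteq> {1..s} \<and> mdeg \<alpha> + e = card B")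
    case False
    then have "class_functional B (\<alpha> + \<beta>) = 0" if "\<beta> \<in> Poly_Mapping.keys g" for \<beta>
      using deg_g[OF that] fin unfolding class_functional_def mon_equiv_def
      by (auto simp: keys_add_mon mdeg_add mdeg_mon_of_set)
    then show ?thesis by simp
  next
    case True
    let ?\<chi> = "\<lambda>\<gamma> x. mon_eval \<gamma> (torus_image E s x)"
    have orth: "class_functional B (\<alpha> + \<beta>) * 2 ^ n =
        (\<Sum>x\<in>sign_vectors. ?\<chi> (\<alpha> + \<beta>) x * ?\<chi> (mon_of_set B) x)" if "\<beta> \<in> Poly_Mapping.keys g" for \<beta>
      using True that g(1) deg_g[OF that] unfolding inS_def
      by (intro class_functional_eq_char_sum[OF B]) (auto simp: keys_add_mon mdeg_add)
    have "(\<Sum>\<beta>\<in>Poly_Mapping.keys g. Poly_Mapping.lookup g \<beta> * class_functional B (\<alpha> + \<beta>)) * 2 ^ n =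
        (\<Sum>\<beta>\<in>Poly_Mapping.keys g. Poly_Mapping.lookup g \<beta> * (class_functional B (\<alpha> + \<beta>) * 2 ^ n))"
      by (simp add: sum_distrib_right mult.assoc)
    also have "\<dots> = (\<Sum>\<beta>\<in>Poly_Mapping.keys g. \<Sum>x\<in>sign_vectors.
        ?\<chi> \<alpha> x * ?\<chi> (mon_of_set B) x * (Poly_Mapping.lookup g \<beta> * ?\<chi> \<beta> x))"
    proof (intro sum.cong refl)
      fix \<beta> assume "\<beta> \<in> Poly_Mapping.keys g"
      then show "Poly_Mapping.lookup g \<beta> * (class_functional B (\<alpha> + \<beta>) * 2 ^ n) =
          (\<Sum>x\<in>sign_vectors. ?\<chi> \<alpha> x * ?\<chi> (mon_of_set B) x * (Poly_Mapping.lookup g \<beta> * ?\<chi> \<beta> x))"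
        unfolding orth[OF \<open>\<beta> \<in> Poly_Mapping.keys g\<close>] sum_distrib_left
        by (intro sum.cong refl) (simp add: mon_eval_add mult_ac)
    qed
    also have "\<dots> = (\<Sum>x\<in>sign_vectors. \<Sum>\<beta>\<in>Poly_Mapping.keys g.
        ?\<chi> \<alpha> x * ?\<chi> (mon_of_set B) x * (Poly_Mapping.lookup g \<beta> * ?\<chi> \<beta> x))"
      by (rule sum.swap)
    also have "\<dots> = (\<Sum>x\<in>sign_vectors. ?\<chi> \<alpha> x * ?\<chi> (mon_of_set B) x * peval g (torus_image E s x))"
      by (simp add: peval_eq_sum_mon_eval sum_distrib_left)
    also have "\<dots> = 0"
      using g(3) sign_vector_in_X torus_image_in_pclass by (intro sum.neutral) auto
    finally show ?thesis using K_two_neq_zero by simp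
  qed
  then show ?thesis unfolding kernel_ideal_def lin_ext_mult by simp
qed

lemma ideal_subset_kernel_ideal:
  assumes "canonical B"
  shows "ideal_gen s (IX E n s \<union> {tvar s ^ 2}) \<subseteq> kernel_ideal (class_functional B)"
proof -
  have "IX E n s \<subseteq> kernel_ideal (class_functional B)"
    unfolding IX_def using vanishing_in_kernel_ideal[OF assms]
    by (intro ideal_gen_subset_kernel_ideal) blast
  then show ?thesis using ts2_in_kernel_ideal[OF assms] by (intro ideal_gen_subset_kernel_ideal) blast
qed

lemma class_functional_eq_zero_if_less:
  assumes B: "canonical B" and less: "grevlex_less \<gamma> (mon_of_set B)"
  shows "class_functional B \<gamma> = 0"
proof (rule ccontr)
  assume "class_functional B \<gamma> \<noteq> 0"
  then have equiv: "mon_equiv \<gamma> (mon_of_set B)" unfolding class_functional_def by (auto split: if_splits)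
  define A where "A = odd_support \<gamma>"
  have \<gamma>: "\<gamma> = mon_of_set A" "card A = card B" "parity_equiv A B"
    using mon_equiv_canonical[OF B equiv] unfolding A_def by auto
  have fin: "finite B" "finite A"
    using B finite_edge_indices unfolding canonical_def A_def odd_support_def by auto
  have "A \<noteq> B" using less \<gamma>(1) unfolding grevlex_less_def by auto
  define C where "C = sym_diff B A"
  have C: "C \<subseteq> {1..s}" "C \<noteq> {}" "even_subgraph C" "even (card C)"
    using \<open>A \<noteq> B\<close> B equiv parity_equiv_iff_sym_diff[OF fin] parity_equiv_sym[OF \<gamma>(3)]
    unfolding C_def canonical_def mon_equiv_def \<gamma>(1) keys_mon_of_set[OF fin(2)] by auto
  have "card (B - A) = card (A - B)"
    using \<gamma>(2) fin by (simp add: card_Diff_subset_Int Int_commute)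
  moreover have "card C = card (B - A) + card (A - B)"
    unfolding C_def using fin by (intro card_Un_disjoint) auto
  moreover have "B \<inter> C = B - A" unfolding C_def by blast
  ultimately have "Max C \<in> B" using B C unfolding canonical_def by auto
  moreover have "{i. Poly_Mapping.lookup (mon_of_set B) i \<noteq> Poly_Mapping.lookup \<gamma> i} = C"
    unfolding \<gamma>(1) C_def using fin by (auto simp: lookup_mon_of_set)
  ultimately show False
    using less equiv fin unfolding grevlex_less_def mon_equiv_def \<gamma>(1)
    by (auto simp: Let_def lookup_mon_of_set split: if_splits)
qed

lemma lin_ext_class_functional_lead:
  assumes B: "canonical B" and lead: "is_lead_mon f (mon_of_set B)"
  shows "lin_ext (class_functional B) f = Poly_Mapping.lookup f (mon_of_set B)"
proof -
  let ?\<mu> = "mon_of_set B"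
  have "finite B" "B \<subseteq> {1..s}" using B finite_edge_indices unfolding canonical_def by auto
  then have "class_functional B ?\<mu> = 1"
    unfolding class_functional_def mon_equiv_def by (simp add: keys_mon_of_set)
  moreover have "?\<mu> \<in> Poly_Mapping.keys f" using lead unfolding is_lead_mon_def by blast
  then have "lin_ext (class_functional B) f = Poly_Mapping.lookup f ?\<mu> * class_functional B ?\<mu> +
      (\<Sum>\<gamma>\<in>Poly_Mapping.keys f - {?\<mu>}. Poly_Mapping.lookup f \<gamma> * class_functional B \<gamma>)"
    unfolding lin_ext_def by (intro sum.remove) auto
  moreover have "(\<Sum>\<gamma>\<in>Poly_Mapping.keys f - {?\<mu>}. Poly_Mapping.lookup f \<gamma> * class_functional B \<gamma>) = 0"
    using lead class_functional_eq_zero_if_less[OF B] unfolding is_lead_mon_def by (intro sum.neutral) auto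
  ultimately show ?thesis by simp
qed

lemma canonical_in_Bset:
  assumes A: "canonical A" and card_A: "card A = d"
  shows "mon_of_set A \<in> Bset E n s d"
proof -
  have A_sub: "A \<subseteq> {1..s}" and fin: "finite A"
    using A finite_edge_indices unfolding canonical_def by auto
  have "\<not> ideal_lead_mon \<mu>" if dvd: "mdvd \<mu> (mon_of_set A)" for \<mu>
  proof
    assume "ideal_lead_mon \<mu>"
    then obtain f where f: "f \<in> ideal_gen s (IX E n s \<union> {tvar s ^ 2})" "is_lead_mon f \<mu>"
      unfolding ideal_lead_mon_def by blast
    obtain B where \<mu>: "\<mu> = mon_of_set B" and "B \<subseteq> A" using mdvd_mon_of_set[OF fin dvd] by blast
    then have B: "canonical B" using canonical_subset[OF A] by blast
    have "lin_ext (class_functional B) f \<noteq> 0"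
      using lin_ext_class_functional_lead[OF B] f(2) unfolding \<mu> is_lead_mon_def by (simp add: in_keys_iff)
    moreover have "lin_ext (class_functional B) (1 * f) = 0"
      using ideal_subset_kernel_ideal[OF B] f(1) unfolding kernel_ideal_def by blast
    ultimately show False by simp
  qed
  moreover have "Poly_Mapping.keys (mon_of_set A) \<subseteq> {1..s}" "mdeg (mon_of_set A) = d"
    using A_sub fin card_A by (simp_all add: keys_mon_of_set mdeg_mon_of_set)
  ultimately show ?thesis unfolding Bset_iff by blast
qed

end

section \<open>A basis of the code\<close>

lemma sum_fun_apply: "(\<Sum>t\<in>T. h t) x = (\<Sum>t\<in>T. h t x)"
  by (induction T rule: infinite_finite_induct) auto

interpretation fun_space: vector_space fscale
  by unfold_locales (auto simp: fscale_def fun_eq_iff algebra_simps)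

context edge_indexed_graph
begin

definition mon_word :: "nat \<Rightarrow> mon \<Rightarrow> (nat \<Rightarrow> K) set \<Rightarrow> K" where
  "mon_word d \<gamma> = codeword E n s d (Poly_Mapping.single \<gamma> 1)"

lemma some_in_X:
  assumes "P \<in> Xset E n s"
  shows "(SOME v. v \<in> P) \<in> P"
proof -
  obtain x where "P = pclass (torus_image E s x)" using assms unfolding Xset_def by blast
  then show ?thesis using torus_image_in_pclass by (metis someI)
qed

lemma codeword_eq_sum:
  "codeword E n s d f = (\<Sum>\<gamma>\<in>Poly_Mapping.keys f. fscale (Poly_Mapping.lookup f \<gamma>) (mon_word d \<gamma>))"
  by (rule ext)
    (simp add: sum_fun_apply fscale_def mon_word_def codeword_def peval_monomial
      peval_eq_sum_mon_eval sum_divide_distrib)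

lemma mon_word_eq:
  assumes "mon_equiv \<alpha> \<beta>"
  shows "mon_word d \<alpha> = mon_word d \<beta>"
proof
  fix P
  show "mon_word d \<alpha> P = mon_word d \<beta> P"
    unfolding mon_word_def codeword_def peval_monomial
    using mon_eval_eq_on_X[OF assms _ some_in_X] by simp
qed

lemma torus_image_one_nonzero:
  assumes "\<forall>i\<in>{1..n}. x i \<noteq> 0"
  shows "torus_image E s x 1 \<noteq> 0"
proof -
  have "E 1 \<subseteq> {1..n}" "card (E 1) = 2" using edges_two s_pos by auto
  then have "finite (E 1)" by (metis card_gt_0_iff zero_less_numeral)
  with \<open>E 1 \<subseteq> {1..n}\<close> show ?thesis unfolding torus_image_def using assms s_pos by auto
qed

text \<open>Since \<open>w\<^sup>2 = 1\<close> for \<open>w = t\<^sub>1(P)\<close>, dividing by \<open>w\<^sup>d\<close> is multiplying by \<open>t\<^sub>1\<^sup>d\<close>.\<close>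
lemma mon_word_at_sign_vector:
  assumes x: "x \<in> sign_vectors" and deg: "mdeg \<gamma> = d"
  shows "mon_word d \<gamma> (pclass (torus_image E s x)) =
    mon_eval (\<gamma> + Poly_Mapping.single 1 d) (torus_image E s x)"
proof -
  let ?P = "pclass (torus_image E s x)" and ?w = "torus_image E s x 1"
  have P: "?P \<in> Xset E n s" using sign_vector_in_X[OF x] .
  obtain c where c: "c \<noteq> 0" "(SOME v. v \<in> ?P) = (\<lambda>k. c * torus_image E s x k)"
    using some_in_X[OF P] unfolding pclass_def by blast
  have "?w \<noteq> 0" using torus_image_one_nonzero sign_vector_nonzero[OF x] by blast
  then have w: "?w ^ d * ?w ^ d = 1"
    using K_square_eq_one by (metis power2_eq_square power_mult_distrib power_one)
  have "mon_word d \<gamma> ?P = c ^ d * mon_eval \<gamma> (torus_image E s x) / (c ^ d * ?w ^ d)"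
    unfolding mon_word_def codeword_def peval_monomial c(2) mon_eval_scale deg
    using P by (simp add: power_mult_distrib)
  also have "\<dots> = mon_eval \<gamma> (torus_image E s x) / ?w ^ d"
    using c(1) by simp
  also have "\<dots> = mon_eval \<gamma> (torus_image E s x) * ?w ^ d"
    using inverse_unique[OF w] by (simp add: divide_inverse)
  also have "\<dots> = mon_eval (\<gamma> + Poly_Mapping.single 1 d) (torus_image E s x)"
    by (simp add: mon_eval_add mon_eval_single)
  finally show ?thesis .
qed

definition padded_mon :: "nat \<Rightarrow> nat set \<Rightarrow> mon" where
  "padded_mon d A = mon_of_set A + Poly_Mapping.single s (d - card A)"

definition canonical_reps :: "nat \<Rightarrow> nat set set" where
  "canonical_reps d = {A. canonical A \<and> card A \<le> d \<and> even (d - card A)}"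

lemma canonical_repsD:
  "A \<in> canonical_reps d \<Longrightarrow> canonical A \<and> A \<subseteq> {1..s} \<and> finite A \<and> card A \<le> d \<and> even (d - card A)"
  unfolding canonical_reps_def canonical_def using finite_edge_indices by blast

lemma finite_canonical_reps: "finite (canonical_reps d)"
  unfolding canonical_reps_def canonical_def by (rule finite_subset[of _ "Pow {1..s}"]) auto

lemma keys_padded_mon: "A \<in> canonical_reps d \<Longrightarrow> Poly_Mapping.keys (padded_mon d A) \<subseteq> {1..s}"
  using s_pos canonical_repsD[of A d] by (auto simp: padded_mon_def keys_add_mon keys_mon_of_set)

lemma mdeg_padded_mon: "A \<in> canonical_reps d \<Longrightarrow> mdeg (padded_mon d A) = d"
  using canonical_repsD[of A d] by (simp add: padded_mon_def mdeg_add mdeg_single mdeg_mon_of_set)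

lemma mon_vdeg_padded_mon:
  "finite A \<Longrightarrow> mon_vdeg (padded_mon d A) i = vdeg A i + (if i \<in> E s then d - card A else 0)"
  by (simp add: padded_mon_def mon_vdeg_add mon_vdeg_single mon_vdeg_mon_of_set)

lemma exists_padded_mon_equiv:
  assumes keys: "Poly_Mapping.keys \<gamma> \<subseteq> {1..s}" and deg: "mdeg \<gamma> = d"
  obtains A where "A \<in> canonical_reps d" "mon_equiv \<gamma> (padded_mon d A)"
proof -
  let ?O = "odd_support \<gamma>"
  have O_sub: "?O \<subseteq> {1..s}" using keys unfolding odd_support_def by auto
  obtain A where A: "canonical A" "parity_equiv ?O A" using canonical_exists[OF O_sub] .
  have "card A \<le> card ?O" using canonical_card_le[OF A(1) O_sub parity_equiv_sym[OF A(2)]] .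
  moreover have "card ?O \<le> d" using card_odd_support_le[of \<gamma>] deg by simp
  moreover have "even (card ?O + card A)" using A(2) unfolding parity_equiv_def by blast
  ultimately have rep: "A \<in> canonical_reps d"
    using A(1) even_mdeg_iff[of \<gamma>] deg unfolding canonical_reps_def by (auto simp: even_add)
  have "even (mon_vdeg \<gamma> i + mon_vdeg (padded_mon d A) i)" for i
    using A(2) even_mon_vdeg_iff[of \<gamma> i] canonical_repsD[OF rep]
    unfolding parity_equiv_def by (auto simp: mon_vdeg_padded_mon even_add)
  then have "mon_equiv \<gamma> (padded_mon d A)"
    using keys deg keys_padded_mon[OF rep] mdeg_padded_mon[OF rep] unfolding mon_equiv_def by simp
  with rep show ?thesis using that by blast
qed

lemma padded_mon_parity_unique:
  assumes A: "A \<in> canonical_reps d" and B: "B \<in> canonical_reps d"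
    and even: "\<forall>i. even (mon_vdeg (padded_mon d A) i + mon_vdeg (padded_mon d B) i)"
  shows "A = B"
proof (rule canonical_unique)
  show "canonical A" "canonical B" using A B by (auto dest: canonical_repsD)
  have "even (vdeg A i + vdeg B i)" for i
    using even[rule_format, of i] canonical_repsD[OF A] canonical_repsD[OF B]
    by (auto simp: mon_vdeg_padded_mon even_add split: if_splits)
  moreover have "even (card A + card B)"
    using canonical_repsD[OF A] canonical_repsD[OF B] by (auto simp: even_add)
  ultimately show "parity_equiv A B" unfolding parity_equiv_def by blast
qed

text \<open>Evaluate at the points of \<open>X\<close> coming from \<open>{\<plusminus>1}\<^sup>n\<close> and use orthogonality of characters.\<close>
lemma padded_words_coeff_zero:
  assumes T: "T \<subseteq> canonical_reps d"
    and zero: "(\<Sum>A\<in>T. fscale (c A) (mon_word d (padded_mon d A))) = 0" and A0: "A0 \<in> T"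
  shows "c A0 = 0"
proof -
  have fin: "finite T" using T finite_canonical_reps finite_subset by blast
  let ?\<nu> = "\<lambda>A. padded_mon d A + Poly_Mapping.single 1 d"
  let ?\<chi> = "\<lambda>A x. mon_eval (?\<nu> A) (torus_image E s x)"
  have keys: "Poly_Mapping.keys (?\<nu> A) \<subseteq> {1..s}" if "A \<in> T" for A
    using keys_padded_mon that T s_pos by (auto simp: keys_add_mon)
  have vanish: "(\<Sum>A\<in>T. c A * ?\<chi> A x) = 0" if x: "x \<in> sign_vectors" for x
  proof -
    have "(\<Sum>A\<in>T. c A * mon_word d (padded_mon d A) (pclass (torus_image E s x))) = 0"
      using fun_cong[OF zero] unfolding sum_fun_apply fscale_def by simp
    then show ?thesis
      using mon_word_at_sign_vector[OF x mdeg_padded_mon] T by (simp add: subset_eq)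
  qed
  have orth: "(\<Sum>x\<in>sign_vectors. ?\<chi> A0 x * ?\<chi> A x) = (if A = A0 then 2 ^ n else 0)" if "A \<in> T" for A
  proof -
    have "mon_vdeg (?\<nu> A0) i + mon_vdeg (?\<nu> A) i =
        mon_vdeg (padded_mon d A0) i + mon_vdeg (padded_mon d A) i + 2 * (if i \<in> E 1 then d else 0)" for i
      by (simp add: mon_vdeg_add mon_vdeg_single)
    then have "(\<forall>i. even (mon_vdeg (?\<nu> A0) i + mon_vdeg (?\<nu> A) i)) \<longleftrightarrow>
        (\<forall>i. even (mon_vdeg (padded_mon d A0) i + mon_vdeg (padded_mon d A) i))"
      by simp
    then have "(\<forall>i. even (mon_vdeg (?\<nu> A0) i + mon_vdeg (?\<nu> A) i)) \<longleftrightarrow> A = A0"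
      using padded_mon_parity_unique[of A0 d A] A0 that T by auto
    then show ?thesis using sum_sign_vectors_mon_eval[OF keys[OF A0] keys[OF that]] by simp
  qed
  have "0 = (\<Sum>x\<in>sign_vectors. ?\<chi> A0 x * (\<Sum>A\<in>T. c A * ?\<chi> A x))"
    using vanish by simp
  also have "\<dots> = (\<Sum>A\<in>T. c A * (\<Sum>x\<in>sign_vectors. ?\<chi> A0 x * ?\<chi> A x))"
    by (simp add: sum_distrib_left sum.swap[of _ sign_vectors] mult_ac)
  also have "\<dots> = (\<Sum>A\<in>T. c A * (if A = A0 then 2 ^ n else 0))"
    using orth by (intro sum.cong refl) (simp only:)
  also have "\<dots> = c A0 * 2 ^ n"
    using fin A0 by (simp add: if_distrib sum.delta' cong: if_cong)
  finally show ?thesis using K_two_neq_zero by simp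
qed

definition code_basis :: "nat \<Rightarrow> ((nat \<Rightarrow> K) set \<Rightarrow> K) set" where
  "code_basis d = (\<lambda>A. mon_word d (padded_mon d A)) ` canonical_reps d"

lemma inj_on_padded_words: "inj_on (\<lambda>A. mon_word d (padded_mon d A)) (canonical_reps d)"
proof (rule inj_onI, rule ccontr)
  fix A B assume AB: "A \<in> canonical_reps d" "B \<in> canonical_reps d"
    and eq: "mon_word d (padded_mon d A) = mon_word d (padded_mon d B)" and "A \<noteq> B"
  let ?c = "\<lambda>C. if C = A then 1 else (-1::K)"
  have "(\<Sum>C\<in>{A, B}. fscale (?c C) (mon_word d (padded_mon d C))) = 0"
    using \<open>A \<noteq> B\<close> eq by (simp add: fscale_def fun_eq_iff)
  then have "?c A = 0" using AB by (intro padded_words_coeff_zero[of "{A, B}" d]) auto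
  then show False by simp
qed

lemma code_basis_independent: "fun_space.independent (code_basis d)"
proof (rule fun_space.independent_if_scalars_zero)
  show "finite (code_basis d)" unfolding code_basis_def using finite_canonical_reps by simp
  fix f y assume sum: "(\<Sum>y\<in>code_basis d. fscale (f y) y) = 0" and "y \<in> code_basis d"
  then obtain A where A: "A \<in> canonical_reps d" "y = mon_word d (padded_mon d A)"
    unfolding code_basis_def by blast
  have "(\<Sum>B\<in>canonical_reps d. fscale (f (mon_word d (padded_mon d B))) (mon_word d (padded_mon d B))) = 0"
    using sum unfolding code_basis_def by (simp add: sum.reindex[OF inj_on_padded_words])
  then show "f y = 0" using padded_words_coeff_zero[OF order.refl _ A(1)] A(2) by simp
qed

lemma code_basis_subset: "code_basis d \<subseteq> CX E n s d"
proof
  fix y assume "y \<in> code_basis d"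
  then obtain A where A: "A \<in> canonical_reps d" "y = mon_word d (padded_mon d A)"
    unfolding code_basis_def by blast
  have "inS s (Poly_Mapping.single (padded_mon d A) 1)" "homog d (Poly_Mapping.single (padded_mon d A) 1)"
    using keys_padded_mon[OF A(1)] mdeg_padded_mon[OF A(1)] unfolding inS_def homog_def by auto
  then show "y \<in> CX E n s d" unfolding CX_def A(2) mon_word_def by blast
qed

lemma CX_subset_span: "CX E n s d \<subseteq> fun_space.span (code_basis d)"
proof
  fix w assume "w \<in> CX E n s d"
  then obtain f where f: "inS s f" "homog d f" and w: "w = codeword E n s d f"
    unfolding CX_def by blast
  have "mon_word d \<gamma> \<in> code_basis d" if "\<gamma> \<in> Poly_Mapping.keys f" for \<gamma>
  proof -
    have "Poly_Mapping.keys \<gamma> \<subseteq> {1..s}" "mdeg \<gamma> = d"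
      using f that unfolding inS_def homog_def by auto
    then obtain A where "A \<in> canonical_reps d" "mon_equiv \<gamma> (padded_mon d A)"
      by (rule exists_padded_mon_equiv)
    then show ?thesis unfolding code_basis_def using mon_word_eq by blast
  qed
  then show "w \<in> fun_space.span (code_basis d)" unfolding w codeword_eq_sum
    by (intro fun_space.span_sum fun_space.span_scale fun_space.span_base)
qed

lemma dim_CX: "fun_space.dim (CX E n s d) = card (canonical_reps d)"
proof -
  have "fun_space.dim (CX E n s d) = card (code_basis d)"
    using fun_space.basis_card_eq_dim[OF code_basis_subset CX_subset_span code_basis_independent] ..
  also have "\<dots> = card (canonical_reps d)"
    unfolding code_basis_def using card_image[OF inj_on_padded_words] .
  finally show ?thesis .
qed

lemma canonical_reps_eq_UN:
  "canonical_reps d = (\<Union>i\<le>d div 2. {A. canonical A \<and> card A = d - 2 * i})"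
proof (intro equalityI subsetI)
  fix A assume "A \<in> canonical_reps d"
  then have A: "canonical A" "card A \<le> d" "even (d - card A)" unfolding canonical_reps_def by blast+
  then have "card A = d - 2 * ((d - card A) div 2)" "(d - card A) div 2 \<le> d div 2"
    by (auto elim!: evenE)
  then show "A \<in> (\<Union>i\<le>d div 2. {A. canonical A \<and> card A = d - 2 * i})" using A(1) by blast
next
  fix A assume "A \<in> (\<Union>i\<le>d div 2. {A. canonical A \<and> card A = d - 2 * i})"
  then obtain i where "i \<le> d div 2" "canonical A" "card A = d - 2 * i" by blast
  moreover have "2 * i \<le> d" using \<open>i \<le> d div 2\<close> by presburger
  ultimately show "A \<in> canonical_reps d" unfolding canonical_reps_def by auto
qed

lemma finite_canonical_of_card: "finite {A. canonical A \<and> card A = k}"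
  by (rule finite_subset[of _ "Pow {1..s}"]) (auto simp: canonical_def)

lemma card_canonical_reps:
  "card (canonical_reps d) = (\<Sum>i\<le>d div 2. card {A. canonical A \<and> card A = d - 2 * i})"
  unfolding canonical_reps_eq_UN
proof (rule card_UN_disjoint)
  show "\<forall>i\<in>{..d div 2}. \<forall>j\<in>{..d div 2}. i \<noteq> j \<longrightarrow>
      {A. canonical A \<and> card A = d - 2 * i} \<inter> {A. canonical A \<and> card A = d - 2 * j} = {}"
  proof (intro ballI impI)
    fix i j assume "i \<in> {..d div 2}" "j \<in> {..d div 2}" "i \<noteq> j"
    then have "d - 2 * i \<noteq> d - 2 * j" by auto
    then show "{A. canonical A \<and> card A = d - 2 * i} \<inter> {A. canonical A \<and> card A = d - 2 * j} = {}"
      by auto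
  qed
qed (simp_all add: finite_canonical_of_card)

section \<open>Parity joins\<close>

lemma card_image_E: "A \<subseteq> {1..s} \<Longrightarrow> card (E ` A) = card A"
  using inj_E by (meson card_image inj_on_subset)

lemma card_edges_at: "A \<subseteq> {1..s} \<Longrightarrow> card {e \<in> E ` A. i \<in> e} = vdeg A i"
proof -
  assume A: "A \<subseteq> {1..s}"
  have "{e \<in> E ` A. i \<in> e} = E ` {k\<in>A. i \<in> E k}" by auto
  then show ?thesis unfolding vdeg_def using card_image_E[of "{k\<in>A. i \<in> E k}"] A by auto
qed

lemma eulerian_image_iff: "A \<subseteq> {1..s} \<Longrightarrow> eulerian E s (E ` A) \<longleftrightarrow> A \<noteq> {} \<and> even_subgraph A"
  unfolding eulerian_def even_subgraph_def edges_def by (auto simp: card_edges_at)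

lemma subset_edges_eq_image: "C \<subseteq> edges E s \<Longrightarrow> C = E ` {k\<in>{1..s}. E k \<in> C}"
  unfolding edges_def by blast

lemma all_eulerian_iff:
  "(\<forall>C. eulerian E s C \<longrightarrow> R C) \<longleftrightarrow> (\<forall>A. A \<subseteq> {1..s} \<and> A \<noteq> {} \<and> even_subgraph A \<longrightarrow> R (E ` A))"
proof
  assume "\<forall>C. eulerian E s C \<longrightarrow> R C"
  then show "\<forall>A. A \<subseteq> {1..s} \<and> A \<noteq> {} \<and> even_subgraph A \<longrightarrow> R (E ` A)"
    using eulerian_image_iff by blast
next
  assume R: "\<forall>A. A \<subseteq> {1..s} \<and> A \<noteq> {} \<and> even_subgraph A \<longrightarrow> R (E ` A)"
  show "\<forall>C. eulerian E s C \<longrightarrow> R C"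
  proof (intro allI impI)
    fix C assume C: "eulerian E s C"
    define A where "A = {k\<in>{1..s}. E k \<in> C}"
    have "C = E ` A" "A \<subseteq> {1..s}"
      using C subset_edges_eq_image unfolding eulerian_def A_def by auto
    then show "R C" using R C eulerian_image_iff by auto
  qed
qed

lemma last_edge_image:
  assumes "A \<subseteq> {1..s}"
  shows "last_edge E s (E ` A) = E (Max A)"
proof -
  have "{k\<in>{1..s}. E k \<in> E ` A} = A" using inj_on_image_mem_iff[OF inj_E _ assms] assms by blast
  then show ?thesis unfolding last_edge_def by simp
qed

lemma image_in_Jset_iff:
  assumes A: "A \<subseteq> {1..s}"
  shows "E ` A \<in> Jset E s d \<longleftrightarrow> canonical A \<and> card A = d"
proof -
  have tr: "card (E ` A \<inter> E ` C) = card (A \<inter> C)" "card (E ` C) = card C"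
      "last_edge E s (E ` C) \<in> E ` A \<longleftrightarrow> Max C \<in> A"
    if C: "C \<subseteq> {1..s}" "C \<noteq> {}" for C
  proof -
    show "card (E ` A \<inter> E ` C) = card (A \<inter> C)"
      using inj_on_image_Int[OF inj_E A C(1)] card_image_E[of "A \<inter> C"] A by (simp add: le_infI1)
    show "card (E ` C) = card C" using card_image_E C by blast
    have "Max C \<in> {1..s}" using C finite_edge_indices Max_in by blast
    then show "last_edge E s (E ` C) \<in> E ` A \<longleftrightarrow> Max C \<in> A"
      unfolding last_edge_image[OF C(1)] using inj_on_image_mem_iff[OF inj_E _ A] by blast
  qed
  define ok where "ok J C \<longleftrightarrow> (even (card C) \<longrightarrow> 2 * card (J \<inter> C) \<le> card C \<and>
      (2 * card (J \<inter> C) = card C \<longrightarrow> last_edge E s C \<in> J))" for J C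
  have ok_image: "ok (E ` A) (E ` C) \<longleftrightarrow> (even (card C) \<longrightarrow> 2 * card (A \<inter> C) \<le> card C \<and>
      (2 * card (A \<inter> C) = card C \<longrightarrow> Max C \<in> A))" if "C \<subseteq> {1..s}" "C \<noteq> {}" for C
    unfolding ok_def using tr[OF that] by simp
  have "E ` A \<in> Jset E s d \<longleftrightarrow> (\<forall>C. eulerian E s C \<longrightarrow> ok (E ` A) C) \<and> card A = d"
    using A card_image_E[OF A] unfolding Jset_def parity_join_def ok_def edges_def by auto
  also have "\<dots> \<longleftrightarrow> canonical A \<and> card A = d"
    unfolding all_eulerian_iff canonical_def using A ok_image by auto
  finally show ?thesis .
qed

lemma Jset_eq_image: "Jset E s d = (\<lambda>A. E ` A) ` {A. canonical A \<and> card A = d}"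
proof (intro equalityI subsetI)
  fix J assume J: "J \<in> Jset E s d"
  define A where "A = {k\<in>{1..s}. E k \<in> J}"
  have "J = E ` A" "A \<subseteq> {1..s}"
    using J subset_edges_eq_image unfolding Jset_def parity_join_def A_def by auto
  then show "J \<in> (\<lambda>A. E ` A) ` {A. canonical A \<and> card A = d}" using J image_in_Jset_iff by blast
qed (auto simp: image_in_Jset_iff canonical_def)

lemma bij_betw_image_E: "bij_betw (\<lambda>A. E ` A) {A. canonical A \<and> card A = d} (Jset E s d)"
proof -
  have "inj_on (\<lambda>A. E ` A) {A. canonical A \<and> card A = d}"
    by (rule inj_on_subset[OF inj_on_image_Pow[OF inj_E]]) (auto simp: canonical_def)
  then show ?thesis unfolding Jset_eq_image by (rule inj_on_imp_bij_betw)
qed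

lemma Bset_eq_image: "Bset E n s d = mon_of_set ` {A. canonical A \<and> card A = d}"
proof (intro equalityI subsetI)
  fix \<gamma> assume "\<gamma> \<in> Bset E n s d"
  then show "\<gamma> \<in> mon_of_set ` {A. canonical A \<and> card A = d}" using Bset_canonical by blast
qed (auto intro: canonical_in_Bset)

lemma bij_betw_mon_of_set: "bij_betw mon_of_set {A. canonical A \<and> card A = d} (Bset E n s d)"
proof -
  have "inj_on mon_of_set {A. canonical A \<and> card A = d}"
  proof (rule inj_onI)
    fix A B assume "A \<in> {A. canonical A \<and> card A = d}" "B \<in> {A. canonical A \<and> card A = d}"
      and "mon_of_set A = mon_of_set B"
    moreover have "finite A" "finite B"
      using calculation finite_edge_indices unfolding canonical_def by auto
    ultimately show "A = B" by (metis keys_mon_of_set)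
  qed
  then show ?thesis unfolding Bset_eq_image by (rule inj_on_imp_bij_betw)
qed

lemma bij_Bset_Jset: "bij_betw (\<lambda>\<gamma>. E ` Poly_Mapping.keys \<gamma>) (Bset E n s d) (Jset E s d)"
proof -
  have "bij_betw ((\<lambda>\<gamma>. E ` Poly_Mapping.keys \<gamma>) \<circ> mon_of_set) {A. canonical A \<and> card A = d} (Jset E s d)"
  proof (subst bij_betw_cong)
    fix A assume "A \<in> {A. canonical A \<and> card A = d}"
    then have "finite A" using finite_edge_indices unfolding canonical_def by auto
    then show "((\<lambda>\<gamma>. E ` Poly_Mapping.keys \<gamma>) \<circ> mon_of_set) A = E ` A" by (simp add: keys_mon_of_set)
  qed (rule bij_betw_image_E)
  then show ?thesis using bij_betw_comp_iff[OF bij_betw_mon_of_set] by blast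
qed

lemma dim_CX_eq_sum_card_Jset:
  "vector_space.dim fscale (CX E n s d) = (\<Sum>i\<le>d div 2. card (Jset E s (d - 2 * i)))"
  using dim_CX card_canonical_reps bij_betw_same_card[OF bij_betw_image_E] by simp

end

theorem theorem2p4:
  fixes n s d :: nat and E :: "nat \<Rightarrow> nat set"
  assumes "s \<ge> 1"
    and "\<forall>k\<in>{1..s}. E k \<subseteq> {1..n} \<and> card (E k) = 2"
    and "inj_on E {1..s}"
  shows "bij_betw (\<lambda>\<gamma>. E ` Poly_Mapping.keys \<gamma>) (Bset E n s d) (Jset E s d) \<and>
         vector_space.dim fscale (CX E n s d) = (\<Sum>i\<le>d div 2. card (Jset E s (d - 2 * i)))"
proof -
  interpret edge_indexed_graph n s E using assms by unfold_locales
  show ?thesis using bij_Bset_Jset dim_CX_eq_sum_card_Jset by blast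
qed

end
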